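(* Let $F'_X\le F_X$ and $F_Z$ be distribution functions, and let $\phi'$ and $\phi$ be the canonical generators of $(F'_X,F_Z)$ and $(F_X,F_Z)$ respectively. Then $\phi'\le\phi$ pointwise on $[0,1]$.
   Context: A distribution function is a non-decreasing map $F:\mathbb R\to[0,1]$ (no right-continuity assumed) with limits $0$ at $-\infty$ and $1$ at $+\infty$; $f(x\pm)$ denote one-sided limits. The canonical generator $\phi$ of $(F_X,F_Z)$: with $F=F_XF_Z$, $\phi(0)=0$, $\phi(1)=1$, and for $u\in(0,1)$ choose $x_0$ with $F(x_0-)\le u\le F(x_0+)$, set $u_-=F(x_0-)$, $u_l=F_X(x_0-)F_Z(x_0)$, $u_u=F_X(x_0+)F_Z(x_0)$, $u_+=F(x_0+)$, and $\phi(u)=F_X(x_0-)$ if $u_-\le u\le u_l$, $\phi(u)=u/F_Z(x_0)$ if $u_l\le u\le u_u$, $\phi(u)=F_X(x_0+)$ if $u_u\le u\le u_+$ (this is independent of the choices). *)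

theory Defs
  imports Complex_Main
begin

text \<open>Distribution function: non-decreasing, values in [0,1], limits 0 at -infinity
  and 1 at +infinity (no right-continuity assumed).\<close>
definition distribution_function :: "(real \<Rightarrow> real) \<Rightarrow> bool" where
  "distribution_function F \<longleftrightarrow>
     mono F \<and> (\<forall>x. 0 \<le> F x \<and> F x \<le> 1) \<and>
     (F \<longlongrightarrow> 0) at_bot \<and> (F \<longlongrightarrow> 1) at_top"

definition lim_left :: "(real \<Rightarrow> real) \<Rightarrow> real \<Rightarrow> real" where
  "lim_left f x = Lim (at_left x) f"

definition lim_right :: "(real \<Rightarrow> real) \<Rightarrow> real \<Rightarrow> real" where
  "lim_right f x = Lim (at_right x) f"

definition canonical_generator ::
  "(real \<Rightarrow> real) \<Rightarrow> (real \<Rightarrow> real) \<Rightarrow> real \<Rightarrow> real" where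
  "canonical_generator FX FZ u =
     (if u = 0 then 0 else if u = 1 then 1 else
      (let F = (\<lambda>x. FX x * FZ x);
           x0 = (SOME x0. lim_left F x0 \<le> u \<and> u \<le> lim_right F x0);
           ul = lim_left FX x0 * FZ x0;
           uu = lim_right FX x0 * FZ x0
       in if u \<le> ul then lim_left FX x0
          else if u \<le> uu then u / FZ x0
          else lim_right FX x0))"

end

theory Submission
  imports Defs "HOL-Analysis.Analysis"
begin

text \<open>Let \<open>x\<^sub>0\<close> and \<open>x\<^sub>1\<close> be the points chosen for \<open>(F\<^sub>X, F\<^sub>Z)\<close> and
  \<open>(F'\<^sub>X, F\<^sub>Z)\<close> at level \<open>u\<close>. Then \<open>F\<^sub>X(x\<^sub>0-) \<le> \<phi>(u) \<le> F\<^sub>X(x\<^sub>0+)\<close> and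
  \<open>u / F\<^sub>Z(x\<^sub>0+) \<le> \<phi>(u)\<close>, and similarly \<open>\<phi>'(u) \<le> F'\<^sub>X(x\<^sub>1+)\<close> and, when
  \<open>F\<^sub>Z(x\<^sub>1-) > 0\<close>, \<open>\<phi>'(u) \<le> u / F\<^sub>Z(x\<^sub>1-)\<close>. As one-sided limits of a monotone
  function at \<open>x\<close> are bounded by those at any \<open>y > x\<close>, the case \<open>x\<^sub>1 < x\<^sub>0\<close> gives
  \<open>\<phi>'(u) \<le> F'\<^sub>X(x\<^sub>1+) \<le> F\<^sub>X(x\<^sub>1+) \<le> F\<^sub>X(x\<^sub>0-) \<le> \<phi>(u)\<close> and the case \<open>x\<^sub>0 < x\<^sub>1\<close>
  gives \<open>\<phi>'(u) \<le> u / F\<^sub>Z(x\<^sub>1-) \<le> u / F\<^sub>Z(x\<^sub>0+) \<le> \<phi>(u)\<close>. If \<open>x\<^sub>0 = x\<^sub>1\<close>, both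
  generators are the same function of the one-sided limits of \<open>F'\<^sub>X\<close>, resp. \<open>F\<^sub>X\<close>,
  at \<open>x\<^sub>0\<close>, and this function is monotone in them.\<close>

lemma tendsto_lim_left_mono:
  fixes G :: "real \<Rightarrow> real"
  assumes "mono G"
  shows "(G \<longlongrightarrow> lim_left G x) (at_left x)"
proof -
  have "(G \<longlongrightarrow> Sup (G ` ({..<x} \<inter> UNIV))) (at x within ({..<x} \<inter> UNIV))"
    by (rule Lim_left_bound[where K = "G x"]) (use assms in \<open>auto simp: mono_def\<close>)
  then show ?thesis
    unfolding lim_left_def by (simp add: tendsto_Lim)
qed

lemma tendsto_lim_right_mono:
  fixes G :: "real \<Rightarrow> real"
  assumes "mono G"
  shows "(G \<longlongrightarrow> lim_right G x) (at_right x)"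
proof -
  have "(G \<longlongrightarrow> Inf (G ` ({x<..} \<inter> UNIV))) (at x within ({x<..} \<inter> UNIV))"
    by (rule Lim_right_bound[where K = "G x"]) (use assms in \<open>auto simp: mono_def\<close>)
  then show ?thesis
    unfolding lim_right_def by (simp add: tendsto_Lim)
qed

lemma lim_left_le_mono:
  fixes G :: "real \<Rightarrow> real"
  assumes "mono G" "\<forall>\<^sub>F y in at_left x. G y \<le> a"
  shows "lim_left G x \<le> a"
  using tendsto_upperbound[OF tendsto_lim_left_mono[OF assms(1)] assms(2)] by simp

lemma lim_left_ge_mono:
  fixes G :: "real \<Rightarrow> real"
  assumes "mono G" "\<forall>\<^sub>F y in at_left x. a \<le> G y"
  shows "a \<le> lim_left G x"
  using tendsto_lowerbound[OF tendsto_lim_left_mono[OF assms(1)] assms(2)] by simp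

lemma lim_right_le_mono:
  fixes G :: "real \<Rightarrow> real"
  assumes "mono G" "\<forall>\<^sub>F y in at_right x. G y \<le> a"
  shows "lim_right G x \<le> a"
  using tendsto_upperbound[OF tendsto_lim_right_mono[OF assms(1)] assms(2)] by simp

lemma lim_right_ge_mono:
  fixes G :: "real \<Rightarrow> real"
  assumes "mono G" "\<forall>\<^sub>F y in at_right x. a \<le> G y"
  shows "a \<le> lim_right G x"
  using tendsto_lowerbound[OF tendsto_lim_right_mono[OF assms(1)] assms(2)] by simp

lemma lim_left_le_mono_self:
  fixes G :: "real \<Rightarrow> real"
  assumes "mono G"
  shows "lim_left G x \<le> G x"
  by (rule lim_left_le_mono[OF assms eventually_mono[OF eventually_at_left_real[of "x - 1" x]]])
    (auto intro: monoD[OF assms])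

lemma lim_right_ge_mono_self:
  fixes G :: "real \<Rightarrow> real"
  assumes "mono G"
  shows "G x \<le> lim_right G x"
  by (rule lim_right_ge_mono[OF assms eventually_mono[OF eventually_at_right_real[of x "x + 1"]]])
    (auto intro: monoD[OF assms])

lemma lim_left_le_lim_right_mono:
  fixes G :: "real \<Rightarrow> real"
  assumes "mono G"
  shows "lim_left G x \<le> lim_right G x"
  using lim_left_le_mono_self[OF assms] lim_right_ge_mono_self[OF assms] by (rule order_trans)

lemma lim_right_le_lim_left_mono:
  fixes G :: "real \<Rightarrow> real"
  assumes "mono G" "x < y"
  shows "lim_right G x \<le> lim_left G y"
proof -
  define m where "m = (x + y) / 2"
  have m: "x < m" "m < y"
    using assms(2) by (auto simp: m_def)
  have "lim_right G x \<le> G m"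
    by (rule lim_right_le_mono[OF assms(1) eventually_mono[OF eventually_at_right_real[of x m]]])
      (use m in \<open>auto intro: monoD[OF assms(1)]\<close>)
  also have "G m \<le> lim_left G y"
    by (rule lim_left_ge_mono[OF assms(1) eventually_mono[OF eventually_at_left_real[of m y]]])
      (use m in \<open>auto intro: monoD[OF assms(1)]\<close>)
  finally show ?thesis .
qed

lemma lim_left_lim_right_mult_mono:
  fixes G H :: "real \<Rightarrow> real"
  assumes "mono G" "mono H"
  shows "lim_left (\<lambda>x. G x * H x) x = lim_left G x * lim_left H x"
    and "lim_right (\<lambda>x. G x * H x) x = lim_right G x * lim_right H x"
  using tendsto_mult[OF tendsto_lim_left_mono[OF assms(1)] tendsto_lim_left_mono[OF assms(2)]]
    tendsto_mult[OF tendsto_lim_right_mono[OF assms(1)] tendsto_lim_right_mono[OF assms(2)]]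
  unfolding lim_left_def[of "\<lambda>x. G x * H x"] lim_right_def[of "\<lambda>x. G x * H x"]
  by (auto intro: tendsto_Lim)

lemma lim_left_lim_right_le_mono:
  fixes G H :: "real \<Rightarrow> real"
  assumes "mono G" "mono H" "\<And>x. G x \<le> H x"
  shows "lim_left G x \<le> lim_left H x" and "lim_right G x \<le> lim_right H x"
  using assms(3)
  by (auto intro: tendsto_le[OF _ tendsto_lim_left_mono[OF assms(2)] tendsto_lim_left_mono[OF assms(1)]]
      tendsto_le[OF _ tendsto_lim_right_mono[OF assms(2)] tendsto_lim_right_mono[OF assms(1)]])

lemma exists_level_point_mono:
  fixes F :: "real \<Rightarrow> real"
  assumes "mono F" "(F \<longlongrightarrow> a) at_bot" "(F \<longlongrightarrow> b) at_top" "a < u" "u < b"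
  shows "\<exists>x. lim_left F x \<le> u \<and> u \<le> lim_right F x"
proof -
  define S where "S = {x. F x < u}"
  obtain N where N: "\<And>x. x \<le> N \<Longrightarrow> F x < u"
    using order_tendstoD(2)[OF assms(2,4)] by (auto simp: eventually_at_bot_linorder)
  obtain M where M: "\<And>x. M \<le> x \<Longrightarrow> u < F x"
    using order_tendstoD(1)[OF assms(3,5)] by (auto simp: eventually_at_top_linorder)
  have "N \<in> S"
    using N by (simp add: S_def)
  have "bdd_above S"
  proof (rule bdd_aboveI)
    fix x assume "x \<in> S"
    then show "x \<le> M"
      using M[of x] by (cases "M \<le> x") (auto simp: S_def)
  qed
  have "lim_left F (Sup S) \<le> u"
  proof (rule lim_left_le_mono[OF assms(1) eventually_mono[OF eventually_at_left_real]])
    fix y assume "y \<in> {Sup S - 1<..<Sup S}"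
    then obtain s where "s \<in> S" "y < s"
      using less_cSupD[of S y] \<open>N \<in> S\<close> by auto
    then show "F y \<le> u"
      using monoD[OF assms(1), of y s] by (simp add: S_def)
  qed simp
  moreover have "u \<le> lim_right F (Sup S)"
  proof (rule lim_right_ge_mono[OF assms(1) eventually_mono[OF eventually_at_right_real]])
    fix y assume "y \<in> {Sup S<..<Sup S + 1}"
    then have "y \<notin> S"
      using cSup_upper[OF _ \<open>bdd_above S\<close>, of y] by auto
    then show "u \<le> F y"
      by (simp add: S_def)
  qed simp
  ultimately show ?thesis
    by blast
qed

lemma distribution_function_mult:
  assumes "distribution_function G" "distribution_function H"
  shows "distribution_function (\<lambda>x. G x * H x)"
  using assms tendsto_mult[of G 0 at_bot H 0] tendsto_mult[of G 1 at_top H 1]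
  unfolding distribution_function_def
  by (auto intro!: monoI mult_mono mult_le_one dest: monoD)

text \<open>The value of the canonical generator at a point \<open>x\<^sub>0\<close>, with \<open>a = F\<^sub>X(x\<^sub>0-)\<close>,
  \<open>b = F\<^sub>X(x\<^sub>0+)\<close> and \<open>z = F\<^sub>Z(x\<^sub>0)\<close>. For \<open>z > 0\<close> it clamps \<open>u / z\<close> to \<open>[a, b]\<close>;
  for \<open>z = 0\<close> it is \<open>b\<close> at every \<open>u > 0\<close>.\<close>
definition ramp :: "real \<Rightarrow> real \<Rightarrow> real \<Rightarrow> real \<Rightarrow> real" where
  "ramp a b z u = (if u \<le> a * z then a else if u \<le> b * z then u / z else b)"

lemma ramp_pos:
  assumes "0 < z"
  shows "ramp a b z u = (if u / z \<le> a then a else if u / z \<le> b then u / z else b)"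
  using assms by (simp add: ramp_def pos_divide_le_eq)

lemma ramp_bounds:
  assumes "0 \<le> z" "a \<le> b"
  shows "a \<le> ramp a b z u" and "ramp a b z u \<le> b"
proof -
  have "a \<le> ramp a b z u \<and> ramp a b z u \<le> b"
  proof (cases "z = 0")
    case False
    with assms have "0 < z"
      by simp
    with assms show ?thesis
      by (auto simp: ramp_pos)
  qed (use assms in \<open>auto simp: ramp_def\<close>)
  then show "a \<le> ramp a b z u" "ramp a b z u \<le> b"
    by auto
qed

lemma ramp_mono:
  assumes "0 \<le> z" "a' \<le> a" "b' \<le> b" "a' \<le> b'" "a \<le> b"
  shows "ramp a' b' z u \<le> ramp a b z u"
proof (cases "z = 0")
  case False
  with assms have "0 < z"
    by simp
  with assms show ?thesis
    by (auto simp: ramp_pos)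
qed (use assms in \<open>auto simp: ramp_def\<close>)

lemma divide_le_ramp:
  assumes "0 < u" "0 \<le> z" "z \<le> w" "a \<le> b" "u \<le> b * w"
  shows "u / w \<le> ramp a b z u"
proof -
  have "0 < w"
    using assms by (cases "w = 0") auto
  then have "u / w \<le> b"
    using assms(5) by (simp add: pos_divide_le_eq)
  show ?thesis
  proof (cases "z = 0")
    case True
    with \<open>u / w \<le> b\<close> \<open>0 < u\<close> show ?thesis
      by (simp add: ramp_def)
  next
    case False
    with assms have "0 < z"
      by simp
    have "u / w \<le> u / z"
      by (rule divide_left_mono) (use assms \<open>0 < z\<close> in auto)
    with \<open>0 < z\<close> \<open>u / w \<le> b\<close> show ?thesis
      by (auto simp: ramp_pos)
  qed
qed

lemma ramp_le_divide:
  assumes "0 \<le> u" "0 < w" "w \<le> z" "a \<le> b" "a * w \<le> u"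
  shows "ramp a b z u \<le> u / w"
proof -
  have "0 < z"
    using assms by simp
  have "u / z \<le> u / w"
    by (rule divide_left_mono) (use assms \<open>0 < z\<close> in auto)
  moreover have "a \<le> u / w"
    using assms by (simp add: pos_le_divide_eq)
  ultimately show ?thesis
    using \<open>0 < z\<close>
    by (auto simp: ramp_pos)
qed

lemma canonical_generator_at_level:
  assumes "distribution_function FX" "distribution_function FZ" "0 < u" "u < 1"
  obtains x0 where "lim_left FX x0 * lim_left FZ x0 \<le> u"
    and "u \<le> lim_right FX x0 * lim_right FZ x0"
    and "canonical_generator FX FZ u = ramp (lim_left FX x0) (lim_right FX x0) (FZ x0) u"
proof -
  define F where "F = (\<lambda>x. FX x * FZ x)"
  define x0 where "x0 = (SOME x0. lim_left F x0 \<le> u \<and> u \<le> lim_right F x0)"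
  have "distribution_function F"
    unfolding F_def using assms(1,2) by (rule distribution_function_mult)
  then have "\<exists>x. lim_left F x \<le> u \<and> u \<le> lim_right F x"
    using assms(3,4) unfolding distribution_function_def by (auto intro: exists_level_point_mono)
  then have "lim_left F x0 \<le> u \<and> u \<le> lim_right F x0"
    unfolding x0_def by (rule someI_ex)
  moreover have "mono FX" "mono FZ"
    using assms(1,2) by (simp_all add: distribution_function_def)
  moreover have "canonical_generator FX FZ u = ramp (lim_left FX x0) (lim_right FX x0) (FZ x0) u"
    using assms(3,4) by (simp add: canonical_generator_def ramp_def Let_def x0_def F_def)
  ultimately show ?thesis
    by (intro that[of x0]) (simp_all add: F_def lim_left_lim_right_mult_mono)
qed

lemma canonical_generator_mono_interior:
  assumes "distribution_function FX'" "distribution_function FX" "distribution_function FZ"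
    and "\<And>x. FX' x \<le> FX x" and "0 < u" "u < 1"
  shows "canonical_generator FX' FZ u \<le> canonical_generator FX FZ u"
proof -
  have mono: "mono FX'" "mono FX" "mono FZ" and FZ_nonneg: "\<And>x. 0 \<le> FZ x"
    using assms(1-3) by (simp_all add: distribution_function_def)
  note FX_jump = lim_left_le_lim_right_mono[OF mono(2)]
  note FX'_jump = lim_left_le_lim_right_mono[OF mono(1)]
  obtain x0 where x0: "u \<le> lim_right FX x0 * lim_right FZ x0"
    and \<phi>: "canonical_generator FX FZ u = ramp (lim_left FX x0) (lim_right FX x0) (FZ x0) u"
    using canonical_generator_at_level[OF assms(2,3,5,6)] by blast
  obtain x1 where x1: "lim_left FX' x1 * lim_left FZ x1 \<le> u"
    and \<phi>': "canonical_generator FX' FZ u = ramp (lim_left FX' x1) (lim_right FX' x1) (FZ x1) u"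
    using canonical_generator_at_level[OF assms(1,3,5,6)] by blast
  consider "x1 < x0" | "x1 = x0" | "x0 < x1"
    by linarith
  then show ?thesis
  proof cases
    case 1
    have "canonical_generator FX' FZ u \<le> lim_right FX' x1"
      unfolding \<phi>' by (rule ramp_bounds[OF FZ_nonneg FX'_jump])
    also have "\<dots> \<le> lim_right FX x1"
      by (rule lim_left_lim_right_le_mono[OF mono(1,2) assms(4)])
    also have "\<dots> \<le> lim_left FX x0"
      by (rule lim_right_le_lim_left_mono[OF mono(2) 1])
    also have "\<dots> \<le> canonical_generator FX FZ u"
      unfolding \<phi> by (rule ramp_bounds[OF FZ_nonneg FX_jump])
    finally show ?thesis .
  next
    case 2
    show ?thesis
      unfolding \<phi> \<phi>' 2 using lim_left_lim_right_le_mono[OF mono(1,2) assms(4)]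
      by (intro ramp_mono FZ_nonneg FX_jump FX'_jump)
  next
    case 3
    have FZ_between: "lim_right FZ x0 \<le> lim_left FZ x1"
      by (rule lim_right_le_lim_left_mono[OF mono(3) 3])
    have FZ_pos: "0 < lim_right FZ x0"
      using x0 \<open>0 < u\<close> FZ_nonneg[of x0] lim_right_ge_mono_self[OF mono(3), of x0]
      by (cases "lim_right FZ x0 = 0") auto
    have "canonical_generator FX' FZ u \<le> u / lim_left FZ x1"
      unfolding \<phi>' using x1 assms(5) FZ_between FZ_pos
      by (intro ramp_le_divide lim_left_le_mono_self mono FX'_jump) auto
    also have "\<dots> \<le> u / lim_right FZ x0"
      by (rule divide_left_mono) (use FZ_between FZ_pos \<open>0 < u\<close> in auto)
    also have "\<dots> \<le> canonical_generator FX FZ u"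
      unfolding \<phi> using x0 assms(5)
      by (intro divide_le_ramp lim_right_ge_mono_self mono FZ_nonneg FX_jump)
    finally show ?thesis .
  qed
qed

theorem lemma1:
  fixes FX' FX FZ :: "real \<Rightarrow> real"
  assumes "distribution_function FX'"
    and "distribution_function FX"
    and "distribution_function FZ"
    and "\<forall>x. FX' x \<le> FX x"
  shows "\<forall>u \<in> {0..1}. canonical_generator FX' FZ u \<le> canonical_generator FX FZ u"
proof
  fix u :: real
  assume "u \<in> {0..1}"
  then consider "u = 0" | "u = 1" | "0 < u" "u < 1"
    by fastforce
  then show "canonical_generator FX' FZ u \<le> canonical_generator FX FZ u"
  proof cases
    case 3
    with assms show ?thesis
      by (intro canonical_generator_mono_interior) auto
  qed (simp_all add: canonical_generator_def)
qed

end
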